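(* Let $0<p_1\le p_2\le1$ and let $X_1,X_2,Y_1,Y_2$ be independent random variables with $X_1$ geometric with success probability $p_1$, $X_2$ geometric with success probability $p_2$, and $Y_1,Y_2$ geometric with success probability $(p_1+p_2)/2$. Then for every positive integer $j$, $$\mathbb{P}(X_1+X_2>j)\ge\mathbb{P}(Y_1+Y_2>j).$$
   Context: A random variable $Y$ is geometric with success probability $p$ if $\mathbb{P}(Y=s)=(1-p)^{s-1}p$ for $s=1,2,\dots$. *)

theory Defs
  imports "HOL-Probability.Probability"
begin

definition is_geometric :: "'a measure \<Rightarrow> ('a \<Rightarrow> nat) \<Rightarrow> real \<Rightarrow> bool" where
  "is_geometric M Y p \<longleftrightarrow>
     Y \<in> measurable M (count_space UNIV) \<and>
     (\<forall>s::nat. s \<ge> 1 \<longrightarrow> measure M {x \<in> space M. Y x = s} = (1 - p) ^ (s - 1) * p)"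

end

theory Submission
  imports Defs
begin

text \<open>Write \<open>a = 1 - p\<^sub>1\<close> and \<open>b = 1 - p\<^sub>2\<close>. Conditioning on \<open>X\<^sub>1\<close> shows that
  \<open>P(X\<^sub>1 + X\<^sub>2 > j) = F(a, b, j) = a^j + (1 - a) (a^0 b^(j-1) + a^1 b^(j-2) + ... + a^(j-1) b^0)\<close>.
  This gives \<open>F(a, b, j+1) = a F(a, b, j) + (1-a) b^j\<close>, and \<open>F\<close> is symmetric in \<open>a, b\<close>
  because \<open>(a - b)\<close> times the bracket is \<open>a^j - b^j\<close>. Averaging the two recurrences gives
  \<open>F(a, b, j+1) = c F(a, b, j) + ((1-a) b^j + (1-b) a^j)/2\<close> with \<open>c = (a + b)/2\<close>; for
  \<open>a = b = c\<close> the inhomogeneous term is \<open>(1-c) c^j\<close>. Induction on \<open>j\<close> thus reduces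
  \<open>F(c, c, j) \<le> F(a, b, j)\<close> to \<open>2 (1-c) c^j \<le> (1-a) b^j + (1-b) a^j\<close>, which follows from the
  power mean inequality \<open>2 c^j \<le> a^j + b^j\<close> and Chebyshev's inequality \<open>(a - b)(a^j - b^j) \<ge> 0\<close>.\<close>

definition homogeneous_sum :: "real \<Rightarrow> real \<Rightarrow> nat \<Rightarrow> real" where
  "homogeneous_sum a b j = (\<Sum>k<j. a^k * b^(j - 1 - k))"

definition geometric_sum_tail :: "real \<Rightarrow> real \<Rightarrow> nat \<Rightarrow> real" where
  "geometric_sum_tail a b j = a^j + (1 - a) * homogeneous_sum a b j"

lemma homogeneous_sum_Suc_left: "homogeneous_sum a b (Suc j) = a * homogeneous_sum a b j + b^j"
proof -
  have "homogeneous_sum a b (Suc j) = b^j + (\<Sum>k<j. a^Suc k * b^(j - 1 - k))"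
    unfolding homogeneous_sum_def by (subst sum.lessThan_Suc_shift) simp
  then show ?thesis
    unfolding homogeneous_sum_def by (simp add: sum_distrib_left mult_ac)
qed

lemma diff_mult_homogeneous_sum: "(a - b) * homogeneous_sum a b j = a^j - b^j"
  unfolding homogeneous_sum_def power_diff_sumr2[of a j b] by (simp add: mult.commute)

lemma geometric_sum_tail_0 [simp]: "geometric_sum_tail a b 0 = 1"
  by (simp add: geometric_sum_tail_def homogeneous_sum_def)

lemma geometric_sum_tail_Suc:
  "geometric_sum_tail a b (Suc j) =
     (a + b) / 2 * geometric_sum_tail a b j + ((1 - a) * b^j + (1 - b) * a^j) / 2"
proof -
  have left: "geometric_sum_tail a b (Suc j) = a * geometric_sum_tail a b j + (1 - a) * b^j"
    unfolding geometric_sum_tail_def homogeneous_sum_Suc_left by (simp add: algebra_simps)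
  have "geometric_sum_tail a b (Suc j) = b * geometric_sum_tail a b j + (1 - b) * a^j
          + (1 - a) * ((a - b) * homogeneous_sum a b j - (a^j - b^j))"
    using left unfolding geometric_sum_tail_def by (simp add: algebra_simps)
  then have right: "geometric_sum_tail a b (Suc j) = b * geometric_sum_tail a b j + (1 - b) * a^j"
    unfolding diff_mult_homogeneous_sum by simp
  show ?thesis
    using left right by (simp add: field_simps)
qed

lemma diff_mult_diff_power_nonneg:
  fixes a b :: real
  assumes "0 \<le> a" "0 \<le> b"
  shows "0 \<le> (a - b) * (a^n - b^n)"
proof (cases "a \<le> b")
  case True
  then have "a^n \<le> b^n" using assms by (simp add: power_mono)
  then show ?thesis using True by (simp add: mult_nonpos_nonpos)
next
  case False
  then have "b^n \<le> a^n" using assms by (simp add: power_mono)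
  then show ?thesis using False by simp
qed

lemma power_midpoint_le:
  fixes a b :: real
  assumes "0 \<le> a" "0 \<le> b"
  shows "2 * ((a + b) / 2)^n \<le> a^n + b^n"
proof (induction n)
  case 0
  then show ?case by simp
next
  case (Suc n)
  have "2 * ((a + b) / 2)^Suc n = (a + b) / 2 * (2 * ((a + b) / 2)^n)"
    by simp
  also have "\<dots> \<le> (a + b) / 2 * (a^n + b^n)"
    using Suc assms by (intro mult_left_mono) auto
  also have "\<dots> \<le> a^Suc n + b^Suc n"
    using diff_mult_diff_power_nonneg[OF assms, of n] by (simp add: algebra_simps)
  finally show ?case .
qed

lemma midpoint_power_le_cross_sum:
  fixes a b :: real
  assumes "0 \<le> a" "a \<le> 1" "0 \<le> b" "b \<le> 1"
  shows "2 * (1 - (a + b) / 2) * ((a + b) / 2)^n \<le> (1 - a) * b^n + (1 - b) * a^n"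
proof -
  define c where "c = (a + b) / 2"
  define S where "S n = a^n + b^n" for n
  have cross_sum: "(1 - a) * b^n + (1 - b) * a^n = (1 - 2 * c) * S n + S (Suc n)"
    unfolding c_def S_def by (simp add: algebra_simps)
  have chebyshev: "c * S n \<le> S (Suc n)"
    using diff_mult_diff_power_nonneg[OF assms(1,3), of n]
    unfolding c_def S_def by (simp add: algebra_simps)
  have "2 * c^n \<le> S n" and "c \<le> 1"
    using power_midpoint_le[OF assms(1,3)] assms unfolding c_def S_def by auto
  then have "0 \<le> (1 - c) * (S n - 2 * c^n)"
    by simp
  then have "2 * (1 - c) * c^n \<le> (1 - 2 * c) * S n + S (Suc n)"
    using chebyshev by (simp add: algebra_simps)
  then show ?thesis
    unfolding cross_sum c_def .
qed

lemma geometric_sum_tail_midpoint_le: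
  fixes a b :: real
  assumes "0 \<le> a" "a \<le> 1" "0 \<le> b" "b \<le> 1"
  shows "geometric_sum_tail ((a + b) / 2) ((a + b) / 2) j \<le> geometric_sum_tail a b j"
proof (induction j)
  case 0
  then show ?case by simp
next
  case (Suc j)
  define c where "c = (a + b) / 2"
  have "0 \<le> c"
    unfolding c_def using assms by simp
  have inhomogeneous_term: "(1 - c) * c^j \<le> ((1 - a) * b^j + (1 - b) * a^j) / 2"
    using midpoint_power_le_cross_sum[OF assms, of j, folded c_def] by (simp add: algebra_simps)
  have "geometric_sum_tail c c (Suc j) = c * geometric_sum_tail c c j + (1 - c) * c^j"
    using geometric_sum_tail_Suc[of c c j] by (simp add: field_simps)
  also have "\<dots> \<le> c * geometric_sum_tail a b j + ((1 - a) * b^j + (1 - b) * a^j) / 2"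
    using mult_left_mono[OF Suc[folded c_def] \<open>0 \<le> c\<close>] inhomogeneous_term by linarith
  also have "\<dots> = geometric_sum_tail a b (Suc j)"
    unfolding geometric_sum_tail_Suc c_def ..
  finally show ?case
    unfolding c_def .
qed

lemma one_minus_geometric_sum_tail:
  fixes p b :: real
  shows "(\<Sum>s=1..j. (1 - p)^(s - 1) * p * (1 - b^(j - s))) = 1 - geometric_sum_tail (1 - p) b j"
proof -
  define a where "a = 1 - p"
  have "(\<Sum>s=1..j. (1 - p)^(s - 1) * p * (1 - b^(j - s))) =
        (\<Sum>k<j. (1 - a) * a^k - (1 - a) * (a^k * b^(j - 1 - k)))"
    unfolding sum_bounds_lt_plus1[symmetric] a_def by (intro sum.cong) (auto simp: algebra_simps)
  also have "\<dots> = (1 - a) * (\<Sum>k<j. a^k) - (1 - a) * homogeneous_sum a b j"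
    unfolding homogeneous_sum_def by (simp add: sum_subtractf sum_distrib_left)
  also have "\<dots> = 1 - geometric_sum_tail a b j"
    unfolding geometric_sum_tail_def using one_diff_power_eq[of a j] by simp
  finally show ?thesis
    unfolding a_def .
qed

lemma is_geometric_measurable: "is_geometric M X p \<Longrightarrow> X \<in> measurable M (count_space UNIV)"
  unfolding is_geometric_def by simp

context prob_space
begin

lemma indep_var_of_indep_vars:
  assumes "indep_vars M' Z I" "i \<in> I" "k \<in> I" "i \<noteq> k"
  shows "indep_var (M' i) (Z i) (M' k) (Z k)"
proof -
  have "indep_var (PiM {i} M') (\<lambda>\<omega>. restrict (\<lambda>l. Z l \<omega>) {i}) (PiM {k} M') (\<lambda>\<omega>. restrict (\<lambda>l. Z l \<omega>) {k})"
    using assms by (intro indep_var_restrict) auto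
  then have "indep_var (M' i) ((\<lambda>f. f i) \<circ> (\<lambda>\<omega>. restrict (\<lambda>l. Z l \<omega>) {i}))
                       (M' k) ((\<lambda>f. f k) \<circ> (\<lambda>\<omega>. restrict (\<lambda>l. Z l \<omega>) {k}))"
    by (rule indep_var_compose) auto
  then show ?thesis
    by (simp add: comp_def)
qed

lemma prob_add_le_convolution:
  fixes U V :: "'a \<Rightarrow> nat"
  assumes indep: "indep_var (count_space UNIV) U (count_space UNIV) V"
  shows "\<P>(x in M. U x + V x \<le> j) = (\<Sum>s\<le>j. \<P>(x in M. U x = s) * \<P>(x in M. V x \<le> j - s))"
proof -
  have [measurable]: "U \<in> measurable M (count_space UNIV)" "V \<in> measurable M (count_space UNIV)"
    using indep_var_rv1[OF indep] indep_var_rv2[OF indep] by auto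
  have "{x \<in> space M. U x + V x \<le> j} = (\<Union>s\<le>j. {x \<in> space M. U x \<in> {s} \<and> V x \<in> {..j - s}})"
    by auto
  then have "\<P>(x in M. U x + V x \<le> j) = (\<Sum>s\<le>j. \<P>(x in M. U x \<in> {s} \<and> V x \<in> {..j - s}))"
    by (simp only:) (intro finite_measure_finite_Union, auto simp: disjoint_family_on_def)
  also have "\<dots> = (\<Sum>s\<le>j. \<P>(x in M. U x \<in> {s}) * \<P>(x in M. V x \<in> {..j - s}))"
    using indep by (intro sum.cong refl prob_indep_random_variable) auto
  finally show ?thesis
    by simp
qed

lemma prob_geometric_le_eq:
  assumes "is_geometric M X p"
  shows "\<P>(x in M. X x \<le> m) = \<P>(x in M. X x = 0) + (1 - (1 - p)^m)"
proof (induction m)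
  case 0
  then show ?case by simp
next
  case (Suc m)
  have [measurable]: "X \<in> measurable M (count_space UNIV)"
    using assms by (rule is_geometric_measurable)
  have "{x \<in> space M. X x \<le> Suc m} = {x \<in> space M. X x \<le> m} \<union> {x \<in> space M. X x = Suc m}"
    by auto
  then have "\<P>(x in M. X x \<le> Suc m) = \<P>(x in M. X x \<le> m) + \<P>(x in M. X x = Suc m)"
    by (simp only:) (intro finite_measure_Union, auto)
  also have "\<dots> = \<P>(x in M. X x = 0) + (1 - (1 - p)^m) + (1 - p)^m * p"
    using Suc assms unfolding is_geometric_def by simp
  finally show ?case
    by (simp add: algebra_simps)
qed

lemma prob_geometric_eq_0:
  assumes "is_geometric M X p" "0 < p" "p \<le> 1"
  shows "\<P>(x in M. X x = 0) = 0"
proof -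
  have "\<P>(x in M. X x = 0) \<le> (1 - p)^m" for m
    using prob_geometric_le_eq[OF assms(1), of m] prob_le_1[of "{x \<in> space M. X x \<le> m}"] by simp
  moreover have "(\<lambda>m. (1 - p)^m) \<longlonglongrightarrow> 0"
    using assms by (intro LIMSEQ_power_zero) auto
  ultimately have "\<P>(x in M. X x = 0) \<le> 0"
    by (intro LIMSEQ_le_const) auto
  then show ?thesis
    using measure_nonneg by (rule antisym)
qed

lemma prob_geometric_le:
  assumes "is_geometric M X p" "0 < p" "p \<le> 1"
  shows "\<P>(x in M. X x \<le> m) = 1 - (1 - p)^m"
  using prob_geometric_le_eq[OF assms(1)] prob_geometric_eq_0[OF assms] by simp

lemma prob_add_gt_geometric:
  fixes U V :: "'a \<Rightarrow> nat"
  assumes indep: "indep_var (count_space UNIV) U (count_space UNIV) V"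
    and U: "is_geometric M U p" "0 < p" "p \<le> 1"
    and V: "is_geometric M V q" "0 < q" "q \<le> 1"
  shows "\<P>(x in M. U x + V x > j) = geometric_sum_tail (1 - p) (1 - q) j"
proof -
  have [measurable]: "U \<in> measurable M (count_space UNIV)" "V \<in> measurable M (count_space UNIV)"
    using U(1) V(1) by (auto intro: is_geometric_measurable)
  have "{x \<in> space M. U x + V x \<le> j} = (\<Union>s\<le>j. {x \<in> space M. U x = s \<and> V x \<le> j - s})"
    by auto
  then have events: "{x \<in> space M. U x + V x \<le> j} \<in> events"
    by (simp only:) measurable
  have "\<P>(x in M. U x + V x \<le> j) = (\<Sum>s\<le>j. \<P>(x in M. U x = s) * (1 - (1 - q)^(j - s)))"
    using prob_add_le_convolution[OF indep] prob_geometric_le[OF V] by simp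
  also have "\<dots> = (\<Sum>s=1..j. \<P>(x in M. U x = s) * (1 - (1 - q)^(j - s)))"
    using prob_geometric_eq_0[OF U] by (simp add: atMost_atLeast0 sum.atLeast_Suc_atMost)
  also have "\<dots> = (\<Sum>s=1..j. (1 - p)^(s - 1) * p * (1 - (1 - q)^(j - s)))"
    using U(1) unfolding is_geometric_def by (intro sum.cong) auto
  also have "\<dots> = 1 - geometric_sum_tail (1 - p) (1 - q) j"
    by (rule one_minus_geometric_sum_tail)
  finally have "\<P>(x in M. U x + V x \<le> j) = 1 - geometric_sum_tail (1 - p) (1 - q) j" .
  moreover have "{x \<in> space M. U x + V x > j} = space M - {x \<in> space M. U x + V x \<le> j}"
    by auto
  ultimately show ?thesis
    using prob_compl[OF events] by simp
qed

end

theorem lemmaB3: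
  fixes M :: "'a measure" and X1 X2 Y1 Y2 :: "'a \<Rightarrow> nat" and p1 p2 :: real and j :: nat
  assumes "prob_space M"
    and "0 < p1" and "p1 \<le> p2" and "p2 \<le> 1"
    and "prob_space.indep_vars M (\<lambda>_. count_space UNIV) (\<lambda>i. [X1, X2, Y1, Y2] ! i) {0..<4}"
    and "is_geometric M X1 p1" and "is_geometric M X2 p2"
    and "is_geometric M Y1 ((p1 + p2) / 2)" and "is_geometric M Y2 ((p1 + p2) / 2)"
    and "j \<ge> 1"
  shows "measure M {x \<in> space M. X1 x + X2 x > j} \<ge> measure M {x \<in> space M. Y1 x + Y2 x > j}"
proof -
  interpret prob_space M by fact
  have "indep_var (count_space UNIV) X1 (count_space UNIV) X2"
    using indep_var_of_indep_vars[OF assms(5), of 0 1] by simp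
  then have X: "\<P>(x in M. X1 x + X2 x > j) = geometric_sum_tail (1 - p1) (1 - p2) j"
    using assms by (intro prob_add_gt_geometric) auto
  have "indep_var (count_space UNIV) Y1 (count_space UNIV) Y2"
    using indep_var_of_indep_vars[OF assms(5), of 2 3] by simp
  then have Y: "\<P>(x in M. Y1 x + Y2 x > j) = geometric_sum_tail (1 - (p1 + p2) / 2) (1 - (p1 + p2) / 2) j"
    using assms by (intro prob_add_gt_geometric) auto
  have midpoint: "1 - (p1 + p2) / 2 = ((1 - p1) + (1 - p2)) / 2"
    by (simp add: field_simps)
  show ?thesis
    unfolding X Y midpoint using assms by (intro geometric_sum_tail_midpoint_le) auto
qed

end
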